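(* In the standing setup with a single fluid, and with $t_{\mathrm b},\xi_{\mathrm b},\xi_0,t_0$ as in the time-interval setup, the duration $\Delta t_{\mathrm b0}=t_0-t_{\mathrm b}$ satisfies $$\Delta t_{\mathrm b0}\ \ge\ \frac{1}{2\sqrt{2\xi_0}}\,\frac{1}{c\,l}\,(\xi_0-\xi_{\mathrm b}).$$
   Context: Standing setup. Fix real constants $c>0$ and $l>0$, a nonempty finite index set $A$, and constants $w_\alpha\in[-1,1]$ for $\alpha\in A$. Let $I\subseteq\mathbb{R}$ be an interval and let $x,y_{\mathrm r},y_{\mathrm i},h,z_\alpha$ ($\alpha\in A$) be real $C^1$ functions of $t\in I$ with $h>0$ and $z_\alpha\ge 0$. Define $\xi(t)=x(t)^2+\sum_{\beta\in A}\frac{1+w_\beta}{2}z_\beta(t)^2$. Assume that on $I$: $\dot x=\big[-x+4c\,y_{\mathrm r}y_{\mathrm i}+x\,\xi\big]h$, $\dot y_{\mathrm r}=\big[\xi\,y_{\mathrm r}-c\,x\,y_{\mathrm i}\big]h$, $\dot y_{\mathrm i}=\big[\xi\,y_{\mathrm i}+c\,x\,y_{\mathrm r}\big]h$, $\dot z_\alpha=\big[-\tfrac{1+w_\alpha}{2}+\xi\big]z_\alpha h$, $\dot h=-\xi h^2$, together with the constraints $x^2+4y_{\mathrm r}^2+\sum_{\beta\in A}z_\beta^2=1$ and $y_{\mathrm r}^2+y_{\mathrm i}^2=\frac{l^2}{2h^2}$. Single fluid: $A$ has exactly one element; write $z$ and $w$ for $z_\alpha$ and $w_\alpha$. Time-interval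 setup: let $t_{\mathrm b}\in I$, $\xi_{\mathrm b}:=\xi(t_{\mathrm b})$, and let $\xi_0$ be a real number with $\xi_0>0$ and $\xi_{\mathrm b}\le\xi_0\le\frac{1+w}{2}$. Assume the set $\{t\in I:\ t\ge t_{\mathrm b},\ \xi(t)=\xi_0\}$ is nonempty and let $t_0$ be its minimum (so $\xi(t)\le\xi_0$ for all $t\in[t_{\mathrm b},t_0]$); put $\Delta t_{\mathrm b0}=t_0-t_{\mathrm b}$. *)

theory Defs
  imports "HOL-Analysis.Analysis"
begin

definition xi_sf :: "(real \<Rightarrow> real) \<Rightarrow> (real \<Rightarrow> real) \<Rightarrow> real \<Rightarrow> real \<Rightarrow> real" where
  "xi_sf x z w t = (x t)^2 + (1 + w) / 2 * (z t)^2"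

end

theory Submission
  imports Defs
begin

text \<open>Along the flow, with k = (1 + w) / 2,
  \<xi>' = 2 h (\<xi>^2 - x^2 - k^2 z^2) + 8 c h x y_r y_i.
  The first term is nonpositive by Cauchy-Schwarz and the constraint x^2 + z^2 \<le> 1.
  As long as \<xi> \<le> \<xi>0 the second is at most 2 sqrt (2 \<xi>0) c l, because
  |x| \<le> sqrt \<xi>0, |2 y_r| \<le> 1 and |h y_i| \<le> l / sqrt 2. Since t0 is the first time
  \<xi> reaches \<xi>0, \<xi> stays below \<xi>0 on [tb, t0], so it grows at most at that rate
  there, and the mean value theorem bounds the time needed to rise from \<xi>(tb) to \<xi>0.
  Only the equations for x and z and the two constraints enter.\<close>

lemma le_until_first_hit:
  fixes f :: "real \<Rightarrow> real"
  assumes cont: "continuous_on {a..b} f" and "f a \<le> v"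
    and first: "\<And>s. a \<le> s \<Longrightarrow> s < b \<Longrightarrow> f s \<noteq> v"
    and t: "t \<in> {a..b}"
  shows "f t \<le> v"
proof (rule ccontr)
  assume "\<not> f t \<le> v"
  moreover have "continuous_on {a..t} f"
    by (rule continuous_on_subset[OF cont]) (use t in auto)
  ultimately obtain s where "a \<le> s" "s \<le> t" "f s = v"
    using IVT'[of f a v t] \<open>f a \<le> v\<close> t by auto
  moreover from \<open>\<not> f t \<le> v\<close> \<open>f s = v\<close> have "s \<noteq> t" by auto
  ultimately show False
    using first t by fastforce
qed

lemma increment_le_of_derivative_le:
  fixes f f' :: "real \<Rightarrow> real"
  assumes "a \<le> b"
    and deriv: "\<And>t. t \<in> {a..b} \<Longrightarrow> (f has_real_derivative f' t) (at t within {a..b})"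
    and bound: "\<And>t. t \<in> {a<..<b} \<Longrightarrow> f' t \<le> B"
  shows "f b - f a \<le> (b - a) * B"
proof (cases "a = b")
  case False
  with \<open>a \<le> b\<close> have "a < b" by simp
  then obtain s where s: "s \<in> {a<..<b}" "f b - f a = f' s * (b - a)"
    using mvt_simple[of a b f "\<lambda>t. (*) (f' t)"] deriv
    by (auto simp: has_field_derivative_def)
  then show ?thesis
    using bound[OF s(1)] \<open>a < b\<close> by (simp add: mult.commute mult_left_mono)
qed simp

lemma has_real_derivative_xi_sf:
  assumes "(x has_real_derivative x') (at t within S)"
    and "(z has_real_derivative z') (at t within S)"
  shows "(xi_sf x z w has_real_derivative 2 * x t * x' + (1 + w) * z t * z') (at t within S)"
  unfolding xi_sf_def [abs_def]
  by (rule derivative_eq_intros assms refl | simp)+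

lemma weighted_sum_sq_le:
  fixes x z k :: real
  assumes "x\<^sup>2 + z\<^sup>2 \<le> 1"
  shows "(x\<^sup>2 + k * z\<^sup>2)\<^sup>2 \<le> x\<^sup>2 + k\<^sup>2 * z\<^sup>2"
proof -
  have "(x\<^sup>2 + z\<^sup>2) * (x\<^sup>2 + k\<^sup>2 * z\<^sup>2) - (x\<^sup>2 + k * z\<^sup>2)\<^sup>2 = x\<^sup>2 * z\<^sup>2 * (1 - k)\<^sup>2"
    by (simp add: power2_eq_square algebra_simps)
  then have "(x\<^sup>2 + k * z\<^sup>2)\<^sup>2 \<le> (x\<^sup>2 + z\<^sup>2) * (x\<^sup>2 + k\<^sup>2 * z\<^sup>2)"
    by (metis diff_ge_0_iff_ge zero_le_mult_iff zero_le_power2)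
  also have "\<dots> \<le> x\<^sup>2 + k\<^sup>2 * z\<^sup>2"
    using mult_right_mono[OF assms, of "x\<^sup>2 + k\<^sup>2 * z\<^sup>2"] by simp
  finally show ?thesis .
qed

lemma coupling_term_le:
  fixes c h l x yr yi \<xi>0 :: real
  assumes "c \<ge> 0" "h > 0" "l \<ge> 0"
    and "x\<^sup>2 \<le> \<xi>0" "4 * yr\<^sup>2 \<le> 1" "yr\<^sup>2 + yi\<^sup>2 = l\<^sup>2 / (2 * h\<^sup>2)"
  shows "8 * c * h * x * yr * yi \<le> 2 * sqrt (2 * \<xi>0) * c * l"
proof -
  define P where "P = x * (2 * yr) * (h * yi)"
  have "(h * yi)\<^sup>2 \<le> l\<^sup>2 / 2"
  proof -
    have "(h * yi)\<^sup>2 \<le> h\<^sup>2 * (yr\<^sup>2 + yi\<^sup>2)"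
      by (simp add: algebra_simps)
    also have "\<dots> = l\<^sup>2 / 2"
      using assms(2,6) by (simp add: field_simps)
    finally show ?thesis .
  qed
  then have "P\<^sup>2 \<le> \<xi>0 * 1 * (l\<^sup>2 / 2)"
    unfolding P_def power_mult_distrib using assms(4,5) order_trans[OF zero_le_power2 assms(4)]
    by (intro mult_mono) auto
  then have "P \<le> sqrt (\<xi>0 * (l\<^sup>2 / 2))"
    by (simp add: real_le_rsqrt)
  also have "\<dots> = l * sqrt (2 * \<xi>0) / 2"
    using \<open>l \<ge> 0\<close> by (simp add: real_sqrt_mult real_sqrt_divide field_simps)
  finally have "4 * c * P \<le> 4 * c * (l * sqrt (2 * \<xi>0) / 2)"
    using \<open>c \<ge> 0\<close> by (intro mult_left_mono) auto
  then show ?thesis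
    unfolding P_def by (simp add: algebra_simps)
qed

lemma xi_rate_le:
  fixes c l w h x yr yi z \<xi> \<xi>0 :: real
  assumes "c \<ge> 0" "l \<ge> 0" "w \<ge> -1" "h > 0"
    and \<xi>: "\<xi> = x\<^sup>2 + (1 + w) / 2 * z\<^sup>2" "\<xi> \<le> \<xi>0"
    and constr1: "x\<^sup>2 + 4 * yr\<^sup>2 + z\<^sup>2 = 1"
    and constr2: "yr\<^sup>2 + yi\<^sup>2 = l\<^sup>2 / (2 * h\<^sup>2)"
  shows "2 * x * ((- x + 4 * c * yr * yi + x * \<xi>) * h)
           + (1 + w) * z * ((- ((1 + w) / 2) + \<xi>) * z * h)
         \<le> 2 * sqrt (2 * \<xi>0) * c * l"
proof -
  define k where "k = (1 + w) / 2"
  have "2 * x * ((- x + 4 * c * yr * yi + x * \<xi>) * h)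
          + (1 + w) * z * ((- ((1 + w) / 2) + \<xi>) * z * h)
        = 2 * h * (\<xi>\<^sup>2 - (x\<^sup>2 + k\<^sup>2 * z\<^sup>2)) + 8 * c * h * x * yr * yi"
    unfolding \<xi>(1) k_def by (simp add: power2_eq_square field_simps)
  moreover have "\<xi>\<^sup>2 \<le> x\<^sup>2 + k\<^sup>2 * z\<^sup>2"
    unfolding \<xi>(1) k_def[symmetric]
    by (rule weighted_sum_sq_le) (use constr1 in \<open>smt (verit) zero_le_power2\<close>)
  moreover have "8 * c * h * x * yr * yi \<le> 2 * sqrt (2 * \<xi>0) * c * l"
  proof (rule coupling_term_le[OF assms(1,4,2) _ _ constr2])
    show "x\<^sup>2 \<le> \<xi>0"
      using \<xi> \<open>w \<ge> -1\<close> by (smt (verit) divide_nonneg_nonneg mult_nonneg_nonneg zero_le_power2)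
    show "4 * yr\<^sup>2 \<le> 1"
      using constr1 by (smt (verit) zero_le_power2)
  qed
  ultimately show ?thesis
    using \<open>h > 0\<close> by (smt (verit) mult_pos_pos mult_nonneg_nonpos)
qed

theorem lemma2:
  fixes c l w :: real and I :: "real set"
    and x yr yi h z dx dyr dyi dh dz :: "real \<Rightarrow> real"
    and tb t0 \<xi>0 :: real
  assumes c_pos: "c > 0" and l_pos: "l > 0"
    and w_range: "-1 \<le> w" "w \<le> 1"
    and I_int: "is_interval I"
    and dx: "\<And>t. t \<in> I \<Longrightarrow> (x has_real_derivative dx t) (at t within I)"
    and dyr: "\<And>t. t \<in> I \<Longrightarrow> (yr has_real_derivative dyr t) (at t within I)"
    and dyi: "\<And>t. t \<in> I \<Longrightarrow> (yi has_real_derivative dyi t) (at t within I)"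
    and dh: "\<And>t. t \<in> I \<Longrightarrow> (h has_real_derivative dh t) (at t within I)"
    and dz: "\<And>t. t \<in> I \<Longrightarrow> (z has_real_derivative dz t) (at t within I)"
    and C1: "continuous_on I dx" "continuous_on I dyr" "continuous_on I dyi"
            "continuous_on I dh" "continuous_on I dz"
    and h_pos: "\<And>t. t \<in> I \<Longrightarrow> h t > 0"
    and z_nn: "\<And>t. t \<in> I \<Longrightarrow> z t \<ge> 0"
    and ode_x: "\<And>t. t \<in> I \<Longrightarrow>
       dx t = (- x t + 4 * c * yr t * yi t + x t * xi_sf x z w t) * h t"
    and ode_yr: "\<And>t. t \<in> I \<Longrightarrow> dyr t = (xi_sf x z w t * yr t - c * x t * yi t) * h t"
    and ode_yi: "\<And>t. t \<in> I \<Longrightarrow> dyi t = (xi_sf x z w t * yi t + c * x t * yr t) * h t"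
    and ode_z: "\<And>t. t \<in> I \<Longrightarrow> dz t = (- ((1 + w) / 2) + xi_sf x z w t) * z t * h t"
    and ode_h: "\<And>t. t \<in> I \<Longrightarrow> dh t = - xi_sf x z w t * (h t)^2"
    and constr1: "\<And>t. t \<in> I \<Longrightarrow> (x t)^2 + 4 * (yr t)^2 + (z t)^2 = 1"
    and constr2: "\<And>t. t \<in> I \<Longrightarrow> (yr t)^2 + (yi t)^2 = l^2 / (2 * (h t)^2)"
    and tb_I: "tb \<in> I"
    and xi0_pos: "\<xi>0 > 0"
    and xi0_ge: "xi_sf x z w tb \<le> \<xi>0"
    and xi0_le: "\<xi>0 \<le> (1 + w) / 2"
    and t0_in: "t0 \<in> I" "t0 \<ge> tb" "xi_sf x z w t0 = \<xi>0"
    and t0_min: "\<And>t. t \<in> I \<Longrightarrow> t \<ge> tb \<Longrightarrow> xi_sf x z w t = \<xi>0 \<Longrightarrow> t0 \<le> t"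
  shows "t0 - tb \<ge> 1 / (2 * sqrt (2 * \<xi>0)) * (1 / (c * l)) * (\<xi>0 - xi_sf x z w tb)"
proof -
  let ?\<xi> = "xi_sf x z w"
  define \<xi>' where "\<xi>' t = 2 * x t * dx t + (1 + w) * z t * dz t" for t
  have sub: "{tb..t0} \<subseteq> I"
    using mem_is_interval_1_I[OF I_int tb_I t0_in(1)] by auto
  have d\<xi>: "(?\<xi> has_real_derivative \<xi>' t) (at t within {tb..t0})" if "t \<in> {tb..t0}" for t
    unfolding \<xi>'_def using that sub
    by (intro has_field_derivative_subset[OF has_real_derivative_xi_sf[OF dx dz] sub]) auto
  have below: "?\<xi> t \<le> \<xi>0" if "t \<in> {tb..t0}" for t
  proof (rule le_until_first_hit[where f = ?\<xi> and a = tb and b = t0, OF _ xi0_ge _ that])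
    show "continuous_on {tb..t0} ?\<xi>"
      using d\<xi> by (rule DERIV_continuous_on)
    show "?\<xi> s \<noteq> \<xi>0" if "tb \<le> s" "s < t0" for s
      using t0_min[of s] sub that by force
  qed
  have rate: "\<xi>' t \<le> 2 * sqrt (2 * \<xi>0) * c * l" if "t \<in> {tb<..<t0}" for t
  proof -
    have "t \<in> I" using sub that by auto
    show ?thesis
      unfolding \<xi>'_def ode_x[OF \<open>t \<in> I\<close>] ode_z[OF \<open>t \<in> I\<close>]
      by (rule xi_rate_le)
        (use c_pos l_pos w_range h_pos constr1 constr2 below that \<open>t \<in> I\<close>
          in \<open>auto simp: xi_sf_def\<close>)
  qed
  have "\<xi>0 - ?\<xi> tb \<le> (t0 - tb) * (2 * sqrt (2 * \<xi>0) * c * l)"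
    using increment_le_of_derivative_le[OF t0_in(2) d\<xi> rate] t0_in(3) by simp
  then show ?thesis
    using c_pos l_pos xi0_pos by (simp add: field_simps)
qed

end
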